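(* Let $0<p\leq 1$, let $A\in\mathbb{R}^{m\times N}$ with $N=nd$, and let $x\in\mathbb{R}^N$ be block $k$-sparse with block support $T_0$, and $y=Ax$. Let $\tilde T\subset\{1,\dots,n\}$ be an arbitrary set, and define $\rho,\alpha\geq 0$ by $|\tilde T|=\rho k$ and $|\tilde T\cap T_0|=\alpha\rho k$. Let $0\leq\omega\leq 1$ and set $\gamma=\omega+(1-\omega)(1+\rho-2\alpha\rho)^{1-p/2}$. Suppose there exists an integer $a$ with $a\geq(1-\alpha)\rho$ and $a>1$ such that $$\delta_{ak}+\frac{a^{1-p/2}}{\gamma}\delta_{(a+1)k}<\frac{a^{1-p/2}}{\gamma}-1 .$$ Then $x$ is the unique solution of $$\min_{z\in\mathbb{R}^N}\sum_{i=1}^n w_i\lVert z[i]\rVert_2^p\quad\text{subject to}\quad Az=y,\qquad w_i=\begin{cases}\omega,& i\in\tilde T\\ 1,& i\in\tilde T^c.\end{cases}$$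
   Context: Vectors $x\in\mathbb{R}^N$, $N=nd$, are split into $n$ consecutive blocks of length $d$: $x[i]=(x_{(i-1)d+1},\dots,x_{id})^T$, $i=1,\dots,n$. A vector is block $k$-sparse if at most $k$ blocks $x[i]$ are nonzero; its block support is the set of indices $i$ with $x[i]\neq 0$. For $v\in\mathbb{R}^m$, $\lVert v\rVert_p^p=\sum_{i=1}^m|v_i|^p$. The block $p$-restricted isometry constant $\delta_k$ of $A$ (of order $k$) is the smallest positive number such that $(1-\delta_k)\lVert z\rVert_2^p\leq\lVert Az\rVert_p^p\leq(1+\delta_k)\lVert z\rVert_2^p$ for all block $k$-sparse $z\in\mathbb{R}^N$. *)

theory Defs
  imports Complex_Main
begin

text \<open>Conventions: a vector in R^N (N = n*d) is a function nat => real that vanishes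
  outside {0..<N}; indices are 0-based, so block i (i < n) consists of the entries
  i*d, ..., i*d + d - 1. An m x N matrix is a function nat => nat => real
  (row, column), only entries with row < m and column < N matter.\<close>

definition vec_in :: "nat \<Rightarrow> (nat \<Rightarrow> real) \<Rightarrow> bool" where
  "vec_in N z \<longleftrightarrow> (\<forall>l\<ge>N. z l = 0)"

definition mat_vec :: "nat \<Rightarrow> nat \<Rightarrow> (nat \<Rightarrow> nat \<Rightarrow> real) \<Rightarrow> (nat \<Rightarrow> real) \<Rightarrow> (nat \<Rightarrow> real)" where
  "mat_vec m N A z = (\<lambda>j. if j < m then (\<Sum>l<N. A j l * z l) else 0)"

definition block :: "nat \<Rightarrow> (nat \<Rightarrow> real) \<Rightarrow> nat \<Rightarrow> (nat \<Rightarrow> real)" where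
  "block d z i = (\<lambda>l. if l < d then z (i * d + l) else 0)"

definition block_norm2 :: "nat \<Rightarrow> (nat \<Rightarrow> real) \<Rightarrow> nat \<Rightarrow> real" where
  "block_norm2 d z i = sqrt (\<Sum>l<d. (z (i * d + l))\<^sup>2)"

definition block_support :: "nat \<Rightarrow> nat \<Rightarrow> (nat \<Rightarrow> real) \<Rightarrow> nat set" where
  "block_support n d z = {i. i < n \<and> block d z i \<noteq> (\<lambda>_. 0)}"

definition block_sparse :: "nat \<Rightarrow> nat \<Rightarrow> nat \<Rightarrow> (nat \<Rightarrow> real) \<Rightarrow> bool" where
  "block_sparse n d k z \<longleftrightarrow> card (block_support n d z) \<le> k"

definition norm2 :: "nat \<Rightarrow> (nat \<Rightarrow> real) \<Rightarrow> real" where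
  "norm2 N z = sqrt (\<Sum>l<N. (z l)\<^sup>2)"

definition pnorm_pow :: "nat \<Rightarrow> real \<Rightarrow> (nat \<Rightarrow> real) \<Rightarrow> real" where
  "pnorm_pow m p v = (\<Sum>j<m. \<bar>v j\<bar> powr p)"

definition block_p_ric :: "nat \<Rightarrow> nat \<Rightarrow> nat \<Rightarrow> real \<Rightarrow> (nat \<Rightarrow> nat \<Rightarrow> real) \<Rightarrow> nat \<Rightarrow> real" where
  "block_p_ric m n d p A k = Inf {\<delta>. \<delta> > 0 \<and>
     (\<forall>z. vec_in (n * d) z \<and> block_sparse n d k z \<longrightarrow>
        (1 - \<delta>) * norm2 (n * d) z powr p \<le> pnorm_pow m p (mat_vec m (n * d) A z) \<and>
        pnorm_pow m p (mat_vec m (n * d) A z) \<le> (1 + \<delta>) * norm2 (n * d) z powr p)}"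

definition weighted_obj :: "nat \<Rightarrow> nat \<Rightarrow> real \<Rightarrow> real \<Rightarrow> nat set \<Rightarrow> (nat \<Rightarrow> real) \<Rightarrow> real" where
  "weighted_obj n d p \<omega> Tt z = (\<Sum>i<n. (if i \<in> Tt then \<omega> else 1) * block_norm2 d z i powr p)"

end

theory Submission
  imports Defs "HOL-Analysis.L2_Norm" "HOL-Analysis.Convex"
begin

(* Let h = z - x, a nonzero vector of the null space of A, with z at least as good as x
   for the weighted objective. Comparing the objectives block by block (using the
   triangle inequality for p-th powers) yields a cone constraint: the mass
   tail = sum of ||h[i]||^p over the blocks i off T0 is at most omega times the mass on
   T0 plus (1 - omega) times the mass on the symmetric difference of T0 and Tt.

   Sort the blocks off T0 by decreasing norm and cut them into chunks of ak blocks.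
   Since Ah = 0, the RIP of order (a+1)k on T0 together with the first chunk, the RIP of
   order ak on the later chunks, and the fact that the l2 norm of a chunk is controlled
   by the l_p mass of the preceding one, give
     (1 - delta_{(a+1)k}) Y <= (1 + delta_{ak}) (ak)^{p/2-1} tail,
   where Y is the p-th power of the l2 norm of h on T0 and the first chunk. On the other
   hand the cone constraint and the power mean inequality give tail <= gamma k^{1-p/2} Y.
   The hypothesis on the RIP constants makes these two bounds incompatible unless Y = 0,
   and then tail = 0 and h = 0. *)

lemma powr_add_le_add_powr:
  fixes a b p :: real
  assumes "0 \<le> a" "0 \<le> b" "0 < p" "p \<le> 1"
  shows "(a + b) powr p \<le> a powr p + b powr p"
proof (cases "a + b = 0")
  case True
  then show ?thesis using assms by simp
next
  case False
  define s where "s = a + b"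
  have s: "s > 0" using False assms s_def by auto
  have "u / s \<le> (u / s) powr p" if "0 \<le> u" "u \<le> s" for u
    using powr_mono'[of p 1 "u / s"] that assms s by (simp add: divide_le_eq_1)
  then have "a / s + b / s \<le> (a / s) powr p + (b / s) powr p"
    using assms s_def by (intro add_mono) auto
  have "s powr p = s powr p * (a / s + b / s)"
    using s by (simp add: s_def add_divide_distrib[symmetric])
  also have "\<dots> \<le> s powr p * ((a / s) powr p + (b / s) powr p)"
    using \<open>a / s + b / s \<le> _\<close> by (intro mult_left_mono) auto
  also have "\<dots> = a powr p + b powr p"
    using s assms by (simp add: powr_divide distrib_left)
  finally show ?thesis by (simp add: s_def)
qed

lemma abs_sum_powr_le_sum_abs_powr:
  fixes g :: "'a \<Rightarrow> real"
  assumes "finite C" "0 < p" "p \<le> 1"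
  shows "\<bar>\<Sum>c\<in>C. g c\<bar> powr p \<le> (\<Sum>c\<in>C. \<bar>g c\<bar> powr p)"
  using assms(1)
proof (induction C rule: finite_induct)
  case empty
  then show ?case by simp
next
  case (insert x F)
  have "\<bar>\<Sum>c\<in>insert x F. g c\<bar> powr p \<le> (\<bar>g x\<bar> + \<bar>\<Sum>c\<in>F. g c\<bar>) powr p"
    using insert assms by (intro powr_mono2) (auto simp: abs_triangle_ineq)
  also have "\<dots> \<le> \<bar>g x\<bar> powr p + \<bar>\<Sum>c\<in>F. g c\<bar> powr p"
    using assms by (intro powr_add_le_add_powr) auto
  also have "\<dots> \<le> \<bar>g x\<bar> powr p + (\<Sum>c\<in>F. \<bar>g c\<bar> powr p)"
    using insert by simp
  finally show ?case using insert by simp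
qed

lemma sqrt_powr: "0 \<le> x \<Longrightarrow> sqrt x powr p = x powr (p / 2)"
  by (simp add: powr_half_sqrt[symmetric] powr_powr)

lemma sum_powr_le_card_powr_sqrt_sum_sq:
  fixes f :: "'a \<Rightarrow> real"
  assumes "finite S" "0 < p" "p \<le> 1" "\<And>i. i \<in> S \<Longrightarrow> 0 \<le> f i"
  shows "(\<Sum>i\<in>S. f i powr p) \<le> real (card S) powr (1 - p / 2) * sqrt (\<Sum>i\<in>S. (f i)\<^sup>2) powr p"
proof -
  define Q where "Q = (\<Sum>i\<in>S. (f i)\<^sup>2)"
  define c where "c = real (card S)"
  define r where "r = p / 2"
  have r: "0 < r" "r \<le> 1" using assms r_def by auto
  show ?thesis
  proof (cases "Q = 0")
    case True
    then have "\<forall>i\<in>S. f i = 0" unfolding Q_def using assms by (simp add: sum_nonneg_eq_0_iff)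
    then show ?thesis using assms by simp
  next
    case False
    then have Qp: "Q > 0" unfolding Q_def by (simp add: order_less_le sum_nonneg)
    then have cp: "c > 0" unfolding Q_def c_def using assms(1) by (auto simp: card_gt_0_iff)
    define M where "M = Q / c"
    have Mp: "M > 0" using Qp cp M_def by simp
    \<comment> \<open>tangent line of the concave map \<open>t \<mapsto> t powr r\<close> at the mean square \<open>M\<close>\<close>
    have each: "f i powr p \<le> M powr r * (1 - r + r * ((f i)\<^sup>2 / M))" if "i \<in> S" for i
    proof -
      have "f i powr p = ((f i)\<^sup>2) powr r"
        using assms(4)[OF that] by (simp add: r_def powr_powr flip: powr_numeral)
      also have "\<dots> = M powr r * ((f i)\<^sup>2 / M) powr r"
        using Mp by (simp add: powr_divide)
      also have "((f i)\<^sup>2 / M) powr r \<le> 1 - r + r * ((f i)\<^sup>2 / M)"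
        using Youngs_inequality_0[of r "1 - r" "(f i)\<^sup>2 / M" 1] r Mp
        by (cases "f i = 0") auto
      finally show ?thesis using Mp by (simp add: mult_left_mono)
    qed
    have "(\<Sum>i\<in>S. f i powr p) \<le> (\<Sum>i\<in>S. M powr r * (1 - r) + (M powr r * r / M) * (f i)\<^sup>2)"
      using each by (intro sum_mono) (simp add: algebra_simps)
    also have "\<dots> = c * (M powr r * (1 - r)) + (M powr r * r / M) * Q"
      by (simp add: sum.distrib sum_distrib_left[symmetric] sum_divide_distrib[symmetric] c_def Q_def)
    also have "\<dots> = M powr r * c"
      using cp Qp by (simp add: M_def field_simps)
    also have "\<dots> = c powr (1 - r) * Q powr r"
      using cp Qp by (simp add: M_def powr_divide powr_diff field_simps)
    finally show ?thesis
      by (simp add: c_def Q_def r_def sqrt_powr sum_nonneg)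
  qed
qed

definition block_restrict :: "nat \<Rightarrow> nat set \<Rightarrow> (nat \<Rightarrow> real) \<Rightarrow> nat \<Rightarrow> real" where
  "block_restrict d S h = (\<lambda>l. if l div d \<in> S then h l else 0)"

lemma sum_lessThan_mult_blocks:
  fixes f :: "nat \<Rightarrow> 'a :: comm_monoid_add"
  shows "(\<Sum>l<n * d. f l) = (\<Sum>i<n. \<Sum>j<d. f (i * d + j))"
proof -
  have "sum f {i * d..<i * d + d} = (\<Sum>j<d. f (i * d + j))" for i
    using sum.shift_bounds_nat_ivl[of f 0 "i * d" d] by (simp add: add.commute atLeast0LessThan)
  then show ?thesis by (simp add: sum.nat_group[symmetric])
qed

lemma block_norm2_nonneg: "block_norm2 d h i \<ge> 0"
  unfolding block_norm2_def by (simp add: sum_nonneg)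

lemma block_norm2_eq_0_iff: "block_norm2 d h i = 0 \<longleftrightarrow> (\<forall>l<d. h (i * d + l) = 0)"
  unfolding block_norm2_def by (auto simp: sum_nonneg sum_nonneg_eq_0_iff)

lemma block_norm2_eq_0_outside_support:
  assumes "i < n" "i \<notin> block_support n d h"
  shows "block_norm2 d h i = 0"
  using assms unfolding block_support_def block_norm2_eq_0_iff block_def by (auto simp: fun_eq_iff) metis

lemma block_norm2_triangle:
  "block_norm2 d (\<lambda>l. u l + v l) i \<le> block_norm2 d u i + block_norm2 d v i"
  using L2_set_triangle_ineq[of "\<lambda>l. u (i * d + l)" "\<lambda>l. v (i * d + l)" "{..<d}"]
  unfolding block_norm2_def L2_set_def by simp

lemma vec_eq_0_if_block_norm2_eq_0:
  assumes "vec_in (n * d) h" "\<And>i. i < n \<Longrightarrow> block_norm2 d h i = 0"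
  shows "h = (\<lambda>_. 0)"
proof
  fix l
  show "h l = 0"
  proof (cases "l < n * d")
    case True
    moreover have "d > 0" using True by (cases "d = 0") auto
    ultimately have "l div d < n" "l mod d < d" by (auto simp: less_mult_imp_div_less)
    then show ?thesis
      using assms(2)[of "l div d"] unfolding block_norm2_eq_0_iff by (metis div_mult_mod_eq)
  qed (use assms(1) vec_in_def in auto)
qed

lemma norm2_nonneg: "norm2 N z \<ge> 0"
  unfolding norm2_def by (simp add: sum_nonneg)

lemma norm2_block_restrict:
  assumes "S \<subseteq> {..<n}"
  shows "norm2 (n * d) (block_restrict d S h) = sqrt (\<Sum>i\<in>S. (block_norm2 d h i)\<^sup>2)"
proof -
  have "(\<Sum>l<n * d. (block_restrict d S h l)\<^sup>2) = (\<Sum>i<n. if i \<in> S then (block_norm2 d h i)\<^sup>2 else 0)"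
    unfolding sum_lessThan_mult_blocks
    by (intro sum.cong refl) (auto simp: block_restrict_def block_norm2_def sum_nonneg)
  also have "\<dots> = (\<Sum>i\<in>S. (block_norm2 d h i)\<^sup>2)"
    using assms by (simp add: sum.If_cases Int_absorb1)
  finally show ?thesis unfolding norm2_def by simp
qed

lemma vec_in_block_restrict: "vec_in N h \<Longrightarrow> vec_in N (block_restrict d S h)"
  unfolding vec_in_def block_restrict_def by auto

lemma block_support_block_restrict: "block_support n d (block_restrict d S h) \<subseteq> S"
  unfolding block_support_def block_restrict_def block_def by (auto simp: fun_eq_iff)

lemma block_sparse_block_restrict:
  assumes "finite S" "card S \<le> k"
  shows "block_sparse n d k (block_restrict d S h)"
  unfolding block_sparse_def
  using card_mono[OF assms(1) block_support_block_restrict[of n d S h]] assms(2) by simp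

lemma mat_vec_add:
  "mat_vec m N A (\<lambda>l. u l + v l) = (\<lambda>j. mat_vec m N A u j + mat_vec m N A v j)"
  unfolding mat_vec_def by (auto simp: fun_eq_iff algebra_simps sum.distrib)

lemma mat_vec_diff:
  "mat_vec m N A (\<lambda>l. u l - v l) = (\<lambda>j. mat_vec m N A u j - mat_vec m N A v j)"
  unfolding mat_vec_def by (auto simp: fun_eq_iff algebra_simps sum_subtractf)

lemma mat_vec_sum:
  "mat_vec m N A (\<lambda>l. \<Sum>c\<in>C. g c l) = (\<lambda>j. \<Sum>c\<in>C. mat_vec m N A (g c) j)"
  unfolding mat_vec_def by (auto simp: fun_eq_iff sum_distrib_left intro: sum.swap)

lemma pnorm_pow_nonneg: "pnorm_pow m p v \<ge> 0"
  unfolding pnorm_pow_def by (simp add: sum_nonneg)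

lemma pnorm_pow_uminus: "pnorm_pow m p (\<lambda>j. - v j) = pnorm_pow m p v"
  unfolding pnorm_pow_def by simp

lemma pnorm_pow_sum_le:
  assumes "finite C" "0 < p" "p \<le> 1"
  shows "pnorm_pow m p (\<lambda>j. \<Sum>c\<in>C. g c j) \<le> (\<Sum>c\<in>C. pnorm_pow m p (g c))"
proof -
  have "pnorm_pow m p (\<lambda>j. \<Sum>c\<in>C. g c j) \<le> (\<Sum>j<m. \<Sum>c\<in>C. \<bar>g c j\<bar> powr p)"
    unfolding pnorm_pow_def by (intro sum_mono abs_sum_powr_le_sum_abs_powr assms)
  also have "\<dots> = (\<Sum>c\<in>C. pnorm_pow m p (g c))"
    unfolding pnorm_pow_def by (rule sum.swap)
  finally show ?thesis .
qed

lemma pnorm_pow_mat_vec_le: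
  assumes "0 < p"
  shows "pnorm_pow m p (mat_vec m N A z) \<le> (\<Sum>j<m. (\<Sum>l<N. \<bar>A j l\<bar>) powr p) * norm2 N z powr p"
proof -
  have z: "\<bar>z l\<bar> \<le> norm2 N z" if "l < N" for l
    using real_sqrt_le_mono[OF member_le_sum[of l "{..<N}" "\<lambda>l. (z l)\<^sup>2"]] that
    unfolding norm2_def by simp
  have "\<bar>mat_vec m N A z j\<bar> \<le> (\<Sum>l<N. \<bar>A j l\<bar>) * norm2 N z" for j
  proof -
    have "\<bar>\<Sum>l<N. A j l * z l\<bar> \<le> (\<Sum>l<N. \<bar>A j l\<bar> * \<bar>z l\<bar>)"
      by (rule order_trans[OF sum_abs]) (simp add: abs_mult)
    also have "\<dots> \<le> (\<Sum>l<N. \<bar>A j l\<bar> * norm2 N z)"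
      using z by (intro sum_mono mult_left_mono) auto
    finally show ?thesis
      unfolding mat_vec_def by (simp add: sum_distrib_right norm2_nonneg sum_nonneg)
  qed
  then have "\<bar>mat_vec m N A z j\<bar> powr p \<le> (\<Sum>l<N. \<bar>A j l\<bar>) powr p * norm2 N z powr p" for j
    using assms by (simp add: powr_mono2 flip: powr_mult)
  then show ?thesis
    unfolding pnorm_pow_def sum_distrib_right by (intro sum_mono)
qed

lemma block_p_ric_bounds:
  assumes "0 < p" "vec_in (n * d) z" "block_sparse n d s z"
  shows "block_p_ric m n d p A s \<ge> 0"
    and "(1 - block_p_ric m n d p A s) * norm2 (n * d) z powr p \<le> pnorm_pow m p (mat_vec m (n * d) A z)"
    and "pnorm_pow m p (mat_vec m (n * d) A z) \<le> (1 + block_p_ric m n d p A s) * norm2 (n * d) z powr p"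
proof -
  let ?N = "\<lambda>z. norm2 (n * d) z powr p"
  let ?P = "\<lambda>z. pnorm_pow m p (mat_vec m (n * d) A z)"
  define D where "D = {\<delta>. \<delta> > 0 \<and> (\<forall>z. vec_in (n * d) z \<and> block_sparse n d s z \<longrightarrow>
        (1 - \<delta>) * ?N z \<le> ?P z \<and> ?P z \<le> (1 + \<delta>) * ?N z)}"
  have ric: "block_p_ric m n d p A s = Inf D" unfolding block_p_ric_def D_def ..
  define C where "C = (\<Sum>j<m. (\<Sum>l<n * d. \<bar>A j l\<bar>) powr p)"
  have C: "C \<ge> 0" unfolding C_def by (simp add: sum_nonneg)
  \<comment> \<open>\<open>D\<close> must be shown nonempty: \<open>Inf {}\<close> is an unspecified junk value\<close>
  have "C + 1 \<in> D"
  proof -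
    have "?P z \<le> C * ?N z" for z
      unfolding C_def by (rule pnorm_pow_mat_vec_le[OF assms(1)])
    also have "C * ?N z \<le> (1 + (C + 1)) * ?N z" for z
      by (intro mult_right_mono) auto
    finally have "?P z \<le> (1 + (C + 1)) * ?N z" for z .
    moreover have "(1 - (C + 1)) * ?N z \<le> ?P z" for z
    proof -
      have "0 \<le> C * ?N z" using C by simp
      then show ?thesis using pnorm_pow_nonneg[of m p "mat_vec m (n * d) A z"]
        by (simp add: algebra_simps)
    qed
    ultimately show ?thesis using C unfolding D_def by auto
  qed
  then have ne: "D \<noteq> {}" by auto
  show "block_p_ric m n d p A s \<ge> 0"
    unfolding ric by (rule cInf_greatest[OF ne]) (simp add: D_def)
  have D: "(1 - \<delta>) * ?N z \<le> ?P z" "?P z \<le> (1 + \<delta>) * ?N z" if "\<delta> \<in> D" for \<delta>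
    using that assms(2,3) unfolding D_def by auto
  show "(1 - block_p_ric m n d p A s) * ?N z \<le> ?P z"
  proof (cases "?N z = 0")
    case False
    then have N: "?N z > 0" by simp
    have "1 - ?P z / ?N z \<le> Inf D"
      using D(1) N by (intro cInf_greatest[OF ne]) (simp add: field_simps)
    then show ?thesis using N unfolding ric by (simp add: field_simps)
  qed (simp add: pnorm_pow_nonneg)
  show "?P z \<le> (1 + block_p_ric m n d p A s) * ?N z"
  proof (cases "?N z = 0")
    case True
    then show ?thesis using D(2) ne by fastforce
  next
    case False
    then have N: "?N z > 0" by simp
    have "?P z / ?N z - 1 \<le> Inf D"
      using D(2) N by (intro cInf_greatest[OF ne]) (simp add: field_simps)
    then show ?thesis using N unfolding ric by (simp add: field_simps)
  qed
qed

lemma block_p_ric_nonneg: "0 < p \<Longrightarrow> 0 \<le> block_p_ric m n d p A s"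
  by (rule block_p_ric_bounds(1)[where z = "\<lambda>_. 0"])
    (simp_all add: vec_in_def block_sparse_def block_support_def block_def)

definition nonincreasing_along :: "nat list \<Rightarrow> (nat \<Rightarrow> real) \<Rightarrow> bool" where
  "nonincreasing_along L b \<longleftrightarrow> (\<forall>i j. i \<le> j \<longrightarrow> j < length L \<longrightarrow> b (L ! j) \<le> b (L ! i))"

definition chunk :: "nat list \<Rightarrow> nat \<Rightarrow> nat \<Rightarrow> nat set" where
  "chunk L K c = (\<lambda>i. L ! i) ` ({c * K..<c * K + K} \<inter> {..<length L})"

lemma exists_nonincreasing_enumeration:
  assumes "finite R"
  shows "\<exists>L. set L = R \<and> distinct L \<and> nonincreasing_along L b"
proof (intro exI conjI)
  define L where "L = sort_key (\<lambda>i. - b i) (sorted_list_of_set R)"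
  show "set L = R" "distinct L" using assms unfolding L_def by simp_all
  have "sorted (map (\<lambda>i. - b i) L)" unfolding L_def by (rule sorted_sort_key)
  then show "nonincreasing_along L b"
    unfolding nonincreasing_along_def by (auto dest: sorted_nth_mono)
qed

lemma nonincreasing_along_powr:
  assumes "nonincreasing_along L b" "\<And>i. b i \<ge> 0" "0 < p"
  shows "nonincreasing_along L (\<lambda>i. b i powr p)"
  using assms unfolding nonincreasing_along_def by (auto intro: powr_mono2)

lemma card_nth_image:
  assumes "distinct L" "I \<subseteq> {..<length L}"
  shows "card ((\<lambda>i. L ! i) ` I) = card I"
  using assms by (intro card_image inj_on_nth) auto

lemma chunk_subset: "chunk L K c \<subseteq> set L"
  unfolding chunk_def by auto

lemma finite_chunk: "finite (chunk L K c)"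
  unfolding chunk_def by auto

lemma card_chunk_le: "card (chunk L K c) \<le> K"
proof -
  have "card (chunk L K c) \<le> card ({c * K..<c * K + K} \<inter> {..<length L})"
    unfolding chunk_def by (rule card_image_le) auto
  also have "\<dots> \<le> card {c * K..<c * K + K}" by (intro card_mono) auto
  finally show ?thesis by simp
qed

lemma chunk_disjoint:
  assumes "distinct L" "c \<noteq> c'"
  shows "chunk L K c \<inter> chunk L K c' = {}"
proof -
  have "i div K = c" if "c * K \<le> i" "i < c * K + K" for i c
    using that by (intro div_nat_eqI) (simp_all add: algebra_simps)
  then show ?thesis
    using assms unfolding chunk_def by (auto simp: nth_eq_iff_index_eq) metis
qed

lemma Union_chunk:
  assumes "length L \<le> J * K"
  shows "(\<Union>c<J. chunk L K c) = set L"
proof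
  show "(\<Union>c<J. chunk L K c) \<subseteq> set L" using chunk_subset by blast
  show "set L \<subseteq> (\<Union>c<J. chunk L K c)"
  proof
    fix x assume "x \<in> set L"
    then obtain i where i: "i < length L" "x = L ! i" by (auto simp: in_set_conv_nth)
    then have K: "K > 0" using assms by (cases K) auto
    have "i div K * K \<le> i" by simp
    moreover have "i < i div K * K + K"
      using div_mult_mod_eq[of i K] mod_less_divisor[OF K, of i] by linarith
    moreover have "i div K < J"
      using i assms K by (simp add: less_mult_imp_div_less)
    ultimately show "x \<in> (\<Union>c<J. chunk L K c)" using i unfolding chunk_def by force
  qed
qed

lemma sum_chunks:
  fixes f :: "nat \<Rightarrow> real"
  assumes "distinct L" "length L \<le> J * K"
  shows "(\<Sum>c<J. sum f (chunk L K c)) = sum f (set L)"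
proof -
  have "sum f (\<Union>c<J. chunk L K c) = (\<Sum>c<J. sum f (chunk L K c))"
    using chunk_disjoint[OF assms(1)] by (intro sum.UNION_disjoint) (auto simp: finite_chunk)
  then show ?thesis using Union_chunk[OF assms(2)] by simp
qed

lemma sum_chunks_le:
  fixes f :: "nat \<Rightarrow> real"
  assumes "distinct L" "0 < K" "\<And>i. 0 \<le> f i"
  shows "(\<Sum>c<length L. sum f (chunk L K c)) \<le> sum f (set L)"
proof -
  have "length L \<le> length L * K" using assms(2) by simp
  then have "(\<Sum>c<length L. sum f (chunk L K c)) = sum f (set L)"
    by (rule sum_chunks[OF assms(1)])
  then show ?thesis by simp
qed

lemma sqrt_sum_sq_powr_le_sum_powr:
  fixes b :: "'a \<Rightarrow> real"
  assumes "finite B" "card B \<le> K" "card C = K" "0 < p" "0 \<le> t"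
    and "\<And>x. x \<in> B \<Longrightarrow> 0 \<le> b x \<and> b x \<le> t" "\<And>x. x \<in> C \<Longrightarrow> t \<le> b x"
  shows "sqrt (\<Sum>i\<in>B. (b i)\<^sup>2) powr p \<le> real K powr (p / 2 - 1) * (\<Sum>i\<in>C. b i powr p)"
proof (cases "K = 0")
  case True
  then show ?thesis using assms by simp
next
  case False
  have "(\<Sum>i\<in>B. (b i)\<^sup>2) \<le> real (card B) * t\<^sup>2"
    using assms by (intro sum_bounded_above power_mono) auto
  also have "\<dots> \<le> real K * t\<^sup>2"
    using assms by (intro mult_right_mono) auto
  finally have "sqrt (\<Sum>i\<in>B. (b i)\<^sup>2) powr p \<le> (real K * t\<^sup>2) powr (p / 2)"
    using assms by (simp add: sqrt_powr sum_nonneg powr_mono2)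
  also have "\<dots> = real K powr (p / 2 - 1) * (real K * t powr p)"
    using False assms
    by (simp add: powr_mult powr_diff powr_powr flip: powr_numeral)
  also have "real K * t powr p \<le> (\<Sum>i\<in>C. b i powr p)"
  proof -
    have "t powr p \<le> b i powr p" if "i \<in> C" for i
      using assms(4,5) assms(7)[OF that] by (intro powr_mono2) auto
    then show ?thesis using sum_bounded_below[of C "t powr p"] assms(3) by force
  qed
  finally show ?thesis by (simp add: mult_left_mono)
qed

lemma sqrt_sum_sq_chunk_Suc_powr_le:
  assumes "distinct L" "nonincreasing_along L b" "\<And>i. b i \<ge> 0" "0 < p"
  shows "sqrt (\<Sum>i\<in>chunk L K (Suc c). (b i)\<^sup>2) powr p
     \<le> real K powr (p / 2 - 1) * (\<Sum>i\<in>chunk L K c. b i powr p)"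
proof (cases "0 < K \<and> Suc c * K \<le> length L")
  case False
  then have "chunk L K (Suc c) = {}" unfolding chunk_def by auto
  then show ?thesis using assms by (simp add: sum_nonneg)
next
  case True
  \<comment> \<open>the last entry of chunk \<open>c\<close> separates the two chunks\<close>
  define t where "t = b (L ! (Suc c * K - 1))"
  have "{c * K..<c * K + K} \<inter> {..<length L} = {c * K..<c * K + K}"
    using True by auto
  then have "card (chunk L K c) = K"
    using True assms(1) unfolding chunk_def by (subst card_nth_image) auto
  moreover have "b x \<le> t" if "x \<in> chunk L K (Suc c)" for x
    using that assms(2) True unfolding chunk_def nonincreasing_along_def t_def by auto
  moreover have "t \<le> b x" if "x \<in> chunk L K c" for x
    using that assms(2) True unfolding chunk_def nonincreasing_along_def t_def by auto
  moreover have "0 \<le> t" unfolding t_def by (rule assms(3))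
  ultimately show ?thesis
    using assms(3,4) by (intro sqrt_sum_sq_powr_le_sum_powr) (auto simp: finite_chunk card_chunk_le)
qed

lemma sum_le_sum_if_exchange_dominated:
  fixes g :: "'a \<Rightarrow> real"
  assumes "finite B" "finite C" "card B = card C"
    and "\<And>y x. y \<in> B - C \<Longrightarrow> x \<in> C - B \<Longrightarrow> g y \<le> g x"
  shows "sum g B \<le> sum g C"
proof -
  have cards: "card (B - C) = card (C - B)"
    using assms(1-3) card_Int_Diff[of B C] card_Int_Diff[of C B] by (simp add: Int_commute)
  have "sum g (B - C) \<le> sum g (C - B)"
  proof (cases "C - B = {}")
    case True
    then have "card (B - C) = 0" using cards by (simp only: card.empty)
    then have "B - C = {}" using assms(1) by simp
    then show ?thesis using True by simp
  next
    case False
    define t where "t = Min (g ` (C - B))"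
    have "sum g (B - C) \<le> real (card (B - C)) * t"
      using assms(2,4) False unfolding t_def by (intro sum_bounded_above) auto
    also have "\<dots> = real (card (C - B)) * t" using cards by simp
    also have "\<dots> \<le> sum g (C - B)"
      using assms(2) unfolding t_def by (intro sum_bounded_below) auto
    finally show ?thesis .
  qed
  then show ?thesis
    using sum.Int_Diff[OF assms(1), of g C] sum.Int_Diff[OF assms(2), of g B] by (simp add: Int_commute)
qed

lemma sum_le_sum_nth_prefix:
  fixes g :: "nat \<Rightarrow> real"
  assumes "distinct L" "nonincreasing_along L g" "B \<subseteq> set L"
  shows "sum g B \<le> sum g ((\<lambda>i. L ! i) ` {..<card B})"
proof (rule sum_le_sum_if_exchange_dominated)
  have "card B \<le> length L"
    using card_mono[OF _ assms(3)] distinct_card[OF assms(1)] by simp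
  then show "card B = card ((\<lambda>i. L ! i) ` {..<card B})"
    using assms(1) by (simp add: card_nth_image)
  show "finite B" using assms(3) finite_subset by blast
  fix y x assume y: "y \<in> B - (\<lambda>i. L ! i) ` {..<card B}" and x: "x \<in> (\<lambda>i. L ! i) ` {..<card B} - B"
  obtain j where j: "j < length L" "y = L ! j"
    using y assms(3) by (metis DiffD1 in_set_conv_nth subsetD)
  obtain i where "i < card B" "x = L ! i" using x by auto
  moreover have "card B \<le> j" using y j by (auto simp: not_le[symmetric])
  ultimately show "g y \<le> g x" using j assms(2) unfolding nonincreasing_along_def by auto
qed simp

lemma sum_weight_if_mem:
  fixes P :: "nat \<Rightarrow> real"
  assumes "finite A"
  shows "(\<Sum>i\<in>A. (if i \<in> Tt then \<omega> else 1) * P i) = (\<Sum>i\<in>A. P i) - (1 - \<omega>) * (\<Sum>i\<in>A \<inter> Tt. P i)"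
proof -
  have "(\<Sum>i\<in>A. (if i \<in> Tt then \<omega> else 1) * P i) = (\<Sum>i\<in>A. P i - (1 - \<omega>) * (if i \<in> Tt then P i else 0))"
    by (intro sum.cong) (auto simp: algebra_simps)
  also have "\<dots> = (\<Sum>i\<in>A. P i) - (1 - \<omega>) * (\<Sum>i\<in>A \<inter> Tt. P i)"
    using assms by (simp add: sum_subtractf sum_distrib_left sum.inter_restrict)
  finally show ?thesis .
qed

lemma block_norm2_powr_le_add_diff:
  assumes "0 < p" "p \<le> 1"
  shows "block_norm2 d x i powr p \<le> block_norm2 d z i powr p + block_norm2 d (\<lambda>l. z l - x l) i powr p"
proof -
  have "block_norm2 d x i \<le> block_norm2 d z i + block_norm2 d (\<lambda>l. x l - z l) i"
    using block_norm2_triangle[of d z "\<lambda>l. x l - z l" i] by simp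
  also have "block_norm2 d (\<lambda>l. x l - z l) i = block_norm2 d (\<lambda>l. z l - x l) i"
    unfolding block_norm2_def by (simp add: power2_commute)
  finally have "block_norm2 d x i powr p \<le> (block_norm2 d z i + block_norm2 d (\<lambda>l. z l - x l) i) powr p"
    using assms by (intro powr_mono2) (auto simp: block_norm2_nonneg)
  also have "\<dots> \<le> block_norm2 d z i powr p + block_norm2 d (\<lambda>l. z l - x l) i powr p"
    using assms by (intro powr_add_le_add_powr) (auto simp: block_norm2_nonneg)
  finally show ?thesis .
qed

lemma weighted_obj_le_imp_cone:
  fixes x z :: "nat \<Rightarrow> real" and d :: nat and p :: real
  defines "P \<equiv> \<lambda>i. block_norm2 d (\<lambda>l. z l - x l) i powr p"
  assumes p: "0 < p" "p \<le> 1" and om: "0 \<le> \<omega>" "\<omega> \<le> 1"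
    and T0: "T0 = block_support n d x" and Tt: "Tt \<subseteq> {..<n}"
    and obj: "weighted_obj n d p \<omega> Tt z \<le> weighted_obj n d p \<omega> Tt x"
  shows "(\<Sum>i\<in>{..<n} - T0. P i)
     \<le> \<omega> * (\<Sum>i\<in>T0. P i) + (1 - \<omega>) * ((\<Sum>i\<in>T0 - Tt. P i) + (\<Sum>i\<in>Tt - T0. P i))"
proof -
  define w where "w i = (if i \<in> Tt then \<omega> else 1)" for i
  define R where "R = {..<n} - T0"
  have T0n: "T0 \<subseteq> {..<n}" unfolding T0 block_support_def by auto
  then have fin: "finite T0" "finite R" unfolding R_def using finite_subset by auto
  have split: "{..<n} = T0 \<union> R" "T0 \<inter> R = {}" unfolding R_def using T0n by auto
  have x_R: "block_norm2 d x i = 0" if "i \<in> R" for i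
    using that block_norm2_eq_0_outside_support unfolding R_def T0 by auto
  have z_R: "block_norm2 d z i powr p = P i" if "i \<in> R" for i
  proof -
    have "\<forall>l<d. x (i * d + l) = 0" using x_R[OF that] by (simp add: block_norm2_eq_0_iff)
    then show ?thesis unfolding P_def block_norm2_def by simp
  qed
  have x_T0: "block_norm2 d x i powr p \<le> block_norm2 d z i powr p + P i" for i
    unfolding P_def using p by (rule block_norm2_powr_le_add_diff)
  have "weighted_obj n d p \<omega> Tt z = (\<Sum>i\<in>T0. w i * block_norm2 d z i powr p) + (\<Sum>i\<in>R. w i * P i)"
    unfolding weighted_obj_def w_def split(1) sum.union_disjoint[OF fin split(2)]
    using z_R by simp
  moreover have "weighted_obj n d p \<omega> Tt x = (\<Sum>i\<in>T0. w i * block_norm2 d x i powr p)"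
    unfolding weighted_obj_def w_def split(1) sum.union_disjoint[OF fin split(2)]
    using x_R p by simp
  moreover have "(\<Sum>i\<in>T0. w i * block_norm2 d x i powr p)
      \<le> (\<Sum>i\<in>T0. w i * block_norm2 d z i powr p) + (\<Sum>i\<in>T0. w i * P i)"
    unfolding sum.distrib[symmetric] distrib_left[symmetric]
    using x_T0 om by (intro sum_mono mult_left_mono) (auto simp: w_def)
  ultimately have "(\<Sum>i\<in>R. w i * P i) \<le> (\<Sum>i\<in>T0. w i * P i)"
    using obj by linarith
  moreover have "(\<Sum>i\<in>R. w i * P i) = (\<Sum>i\<in>R. P i) - (1 - \<omega>) * (\<Sum>i\<in>Tt - T0. P i)"
  proof -
    have "R \<inter> Tt = Tt - T0" unfolding R_def using Tt by auto
    then show ?thesis unfolding w_def sum_weight_if_mem[OF fin(2)] by simp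
  qed
  moreover have "(\<Sum>i\<in>T0. w i * P i) = \<omega> * (\<Sum>i\<in>T0. P i) + (1 - \<omega>) * (\<Sum>i\<in>T0 - Tt. P i)"
    unfolding w_def sum_weight_if_mem[OF fin(1)] sum.Int_Diff[OF fin(1), of P Tt]
    by (simp add: algebra_simps)
  ultimately show ?thesis unfolding R_def by (simp add: algebra_simps)
qed

lemma sum_if_mem_disjoint_family:
  fixes v :: "'b :: comm_monoid_add"
  assumes "finite C" "\<And>c c'. c \<in> C \<Longrightarrow> c' \<in> C \<Longrightarrow> c \<noteq> c' \<Longrightarrow> F c \<inter> F c' = {}"
  shows "(\<Sum>c\<in>C. if i \<in> F c then v else 0) = (if i \<in> (\<Union>c\<in>C. F c) then v else 0)"
proof (cases "i \<in> (\<Union>c\<in>C. F c)")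
  case True
  then obtain c0 where c0: "c0 \<in> C" "i \<in> F c0" by auto
  then have "(\<Sum>c\<in>C. if i \<in> F c then v else 0) = (\<Sum>c\<in>C. if c = c0 then v else 0)"
    using assms(2) by (intro sum.cong) auto
  then show ?thesis using True assms(1) c0 by simp
qed auto

lemma block_restrict_chunk_decomposition:
  assumes "0 < d" "0 < K" "vec_in (n * d) h" "distinct L" "set L = {..<n} - T"
  shows "h l = block_restrict d (T \<union> chunk L K 0) h l
    + (\<Sum>c<length L. block_restrict d (chunk L K (Suc c)) h l)"
proof -
  define i where "i = l div d"
  define U where "U = (\<Union>c<length L. chunk L K (Suc c))"
  have tail: "(\<Sum>c<length L. block_restrict d (chunk L K (Suc c)) h l) = (if i \<in> U then h l else 0)"
    unfolding block_restrict_def i_def[symmetric] U_def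
    using chunk_disjoint[OF assms(4)] by (intro sum_if_mem_disjoint_family) auto
  have "(T \<union> chunk L K 0) \<inter> U = {}"
    using chunk_subset[of L K] chunk_disjoint[OF assms(4), of 0] assms(5) unfolding U_def by blast
  moreover have "i \<in> T \<union> chunk L K 0 \<union> U" if "i < n"
  proof -
    have "length L \<le> Suc (length L) * K" using assms(2) by (simp add: trans_le_add2)
    then have "set L = (\<Union>c<Suc (length L). chunk L K c)" by (rule Union_chunk[symmetric])
    also have "\<dots> = chunk L K 0 \<union> U" unfolding U_def lessThan_Suc_eq_insert_0 by auto
    finally show ?thesis using that assms(5) by auto
  qed
  moreover have "h l = 0" if "\<not> i < n"
    using that assms(3) unfolding i_def vec_in_def by (meson less_mult_imp_div_less not_le)
  ultimately show ?thesis
    unfolding tail by (auto simp: block_restrict_def i_def[symmetric])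
qed

lemma sum_powr_le_card_powr_norm2_block_restrict:
  assumes "X \<subseteq> U" "U \<subseteq> {..<n}" "0 < p" "p \<le> 1"
  shows "(\<Sum>i\<in>X. block_norm2 d h i powr p)
    \<le> real (card X) powr (1 - p / 2) * norm2 (n * d) (block_restrict d U h) powr p"
proof -
  have fin: "finite U" "finite X" using assms(1,2) by (meson finite_lessThan finite_subset)+
  have "(\<Sum>i\<in>X. (block_norm2 d h i)\<^sup>2) \<le> (\<Sum>i\<in>U. (block_norm2 d h i)\<^sup>2)"
    using assms(1) fin by (intro sum_mono2) auto
  then have sqrt_le: "sqrt (\<Sum>i\<in>X. (block_norm2 d h i)\<^sup>2) powr p \<le> norm2 (n * d) (block_restrict d U h) powr p"
    unfolding norm2_block_restrict[OF assms(2)] using assms(3)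
    by (intro powr_mono2) (auto simp: sum_nonneg)
  have "(\<Sum>i\<in>X. block_norm2 d h i powr p)
      \<le> real (card X) powr (1 - p / 2) * sqrt (\<Sum>i\<in>X. (block_norm2 d h i)\<^sup>2) powr p"
    using fin(2) assms(3,4) by (rule sum_powr_le_card_powr_sqrt_sum_sq) (simp add: block_norm2_nonneg)
  also have "\<dots> \<le> real (card X) powr (1 - p / 2) * norm2 (n * d) (block_restrict d U h) powr p"
    using sqrt_le by (rule mult_left_mono) simp
  finally show ?thesis .
qed

lemma cone_tail_bound:
  fixes h :: "nat \<Rightarrow> real" and d :: nat and p :: real
  defines "P \<equiv> \<lambda>i. block_norm2 d h i powr p"
  assumes p: "0 < p" "p \<le> 1" and om: "0 \<le> \<omega>" "\<omega> \<le> 1"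
    and T0: "T0 \<subseteq> {..<n}" and Tt: "Tt \<subseteq> {..<n}"
    and L: "distinct L" "set L = {..<n} - T0" "nonincreasing_along L (block_norm2 d h)"
    and K: "card (Tt - T0) \<le> K"
    and cone: "(\<Sum>i\<in>{..<n} - T0. P i)
      \<le> \<omega> * (\<Sum>i\<in>T0. P i) + (1 - \<omega>) * ((\<Sum>i\<in>T0 - Tt. P i) + (\<Sum>i\<in>Tt - T0. P i))"
  shows "(\<Sum>i\<in>{..<n} - T0. P i)
    \<le> (\<omega> * real (card T0) powr (1 - p / 2)
        + (1 - \<omega>) * real (card (T0 - Tt) + card (Tt - T0)) powr (1 - p / 2))
      * norm2 (n * d) (block_restrict d (T0 \<union> chunk L K 0) h) powr p"
proof -
  define Y where "Y = norm2 (n * d) (block_restrict d (T0 \<union> chunk L K 0) h) powr p"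
  define q where "q = card (Tt - T0)"
  \<comment> \<open>the \<open>q\<close> largest tail blocks carry at least the mass of \<open>Tt - T0\<close> and lie in chunk \<open>0\<close>\<close>
  define Top where "Top = (\<lambda>i. L ! i) ` {..<q}"
  have q: "q \<le> length L"
    using card_mono[of "set L" "Tt - T0"] Tt L(2) distinct_card[OF L(1)] unfolding q_def by auto
  have Top: "Top \<subseteq> chunk L K 0" "Top \<subseteq> {..<n} - T0" "card Top = q" "finite Top"
  proof -
    show "Top \<subseteq> chunk L K 0" using K q unfolding Top_def chunk_def q_def by auto
    have "L ! i \<in> set L" if "i < q" for i using that q by simp
    then show "Top \<subseteq> {..<n} - T0" using L(2) unfolding Top_def by auto
    show "card Top = q" unfolding Top_def using q L(1) by (subst card_nth_image) auto
  qed (simp add: Top_def)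
  have fin: "finite T0" using T0 finite_subset by blast
  have chunk0: "chunk L K 0 \<subseteq> {..<n}" using chunk_subset[of L K 0] L(2) by auto
  have "(\<Sum>i\<in>Tt - T0. P i) \<le> (\<Sum>i\<in>Top. P i)"
    unfolding Top_def q_def P_def using L Tt
    by (intro sum_le_sum_nth_prefix nonincreasing_along_powr) (auto simp: block_norm2_nonneg p)
  also have "(\<Sum>i\<in>T0 - Tt. P i) + (\<Sum>i\<in>Top. P i) = (\<Sum>i\<in>(T0 - Tt) \<union> Top. P i)"
    using Top fin by (intro sum.union_disjoint[symmetric]) auto
  also have "\<dots> \<le> real (card ((T0 - Tt) \<union> Top)) powr (1 - p / 2) * Y"
    unfolding P_def Y_def using Top T0 chunk0 p
    by (intro sum_powr_le_card_powr_norm2_block_restrict) auto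
  also have "\<dots> \<le> real (card (T0 - Tt) + card (Tt - T0)) powr (1 - p / 2) * Y"
    using card_Un_le[of "T0 - Tt" Top] Top(3) p unfolding q_def Y_def
    by (intro mult_right_mono powr_mono2) auto
  finally have S: "(\<Sum>i\<in>T0 - Tt. P i) + (\<Sum>i\<in>Tt - T0. P i)
      \<le> real (card (T0 - Tt) + card (Tt - T0)) powr (1 - p / 2) * Y"
    by simp
  have "(\<Sum>i\<in>T0. P i) \<le> real (card T0) powr (1 - p / 2) * Y"
    unfolding P_def Y_def using T0 chunk0 p
    by (intro sum_powr_le_card_powr_norm2_block_restrict) auto
  then have "\<omega> * (\<Sum>i\<in>T0. P i) + (1 - \<omega>) * ((\<Sum>i\<in>T0 - Tt. P i) + (\<Sum>i\<in>Tt - T0. P i))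
      \<le> \<omega> * (real (card T0) powr (1 - p / 2) * Y)
        + (1 - \<omega>) * (real (card (T0 - Tt) + card (Tt - T0)) powr (1 - p / 2) * Y)"
    using S om by (intro add_mono mult_left_mono) auto
  then show ?thesis
    using cone unfolding Y_def[symmetric] by (simp add: algebra_simps)
qed

lemma shifting_bound:
  fixes h :: "nat \<Rightarrow> real"
  assumes p: "0 < p" "p \<le> 1" and d: "0 < d" and K: "0 < K"
    and h: "vec_in (n * d) h" "mat_vec m (n * d) A h = (\<lambda>_. 0)"
    and L: "distinct L" "set L = {..<n} - T" "nonincreasing_along L (block_norm2 d h)"
    and s: "card (T \<union> chunk L K 0) \<le> s" and T: "T \<subseteq> {..<n}"
  shows "(1 - block_p_ric m n d p A s) * norm2 (n * d) (block_restrict d (T \<union> chunk L K 0) h) powr p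
    \<le> (1 + block_p_ric m n d p A K) * real K powr (p / 2 - 1)
      * (\<Sum>i\<in>{..<n} - T. block_norm2 d h i powr p)"
proof -
  define H where "H = block_restrict d (T \<union> chunk L K 0) h"
  define G where "G c = block_restrict d (chunk L K (Suc c)) h" for c
  define \<delta> where "\<delta> = block_p_ric m n d p A K"
  define P where "P i = block_norm2 d h i powr p" for i
  let ?A = "mat_vec m (n * d) A"
  have chunk_n: "chunk L K c \<subseteq> {..<n}" for c using chunk_subset[of L K c] L(2) by auto
  have \<delta>: "0 \<le> \<delta>" unfolding \<delta>_def using p(1) by (rule block_p_ric_nonneg)
  have "h = (\<lambda>l. H l + (\<Sum>c<length L. G c l))"
    unfolding H_def G_def using block_restrict_chunk_decomposition[OF d K h(1) L(1,2)] by blast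
  then have "(\<lambda>j. ?A H j + (\<Sum>c<length L. ?A (G c) j)) = (\<lambda>_. 0)"
    using h(2) by (metis mat_vec_add mat_vec_sum)
  then have AH: "?A H = (\<lambda>j. - (\<Sum>c<length L. ?A (G c) j))"
    by (auto simp: fun_eq_iff eq_neg_iff_add_eq_0)
  have G: "pnorm_pow m p (?A (G c)) \<le> (1 + \<delta>) * (real K powr (p / 2 - 1) * (\<Sum>i\<in>chunk L K c. P i))" for c
  proof -
    have "pnorm_pow m p (?A (G c)) \<le> (1 + \<delta>) * norm2 (n * d) (G c) powr p"
      unfolding \<delta>_def G_def using vec_in_block_restrict[OF h(1)]
        block_sparse_block_restrict[OF finite_chunk card_chunk_le]
      by (rule block_p_ric_bounds(3)[OF p(1)])
    also have "norm2 (n * d) (G c) = sqrt (\<Sum>i\<in>chunk L K (Suc c). (block_norm2 d h i)\<^sup>2)"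
      unfolding G_def by (rule norm2_block_restrict[OF chunk_n])
    also have "(1 + \<delta>) * \<dots> powr p \<le> (1 + \<delta>) * (real K powr (p / 2 - 1) * (\<Sum>i\<in>chunk L K c. P i))"
      unfolding P_def using \<delta> L(1,3) p(1)
      by (intro mult_left_mono sqrt_sum_sq_chunk_Suc_powr_le) (auto simp: block_norm2_nonneg)
    finally show ?thesis .
  qed
  have chunks: "(\<Sum>c<length L. \<Sum>i\<in>chunk L K c. P i) \<le> (\<Sum>i\<in>{..<n} - T. P i)"
    using sum_chunks_le[OF L(1) K, of P] L(2) by (simp add: P_def)
  have "(1 - block_p_ric m n d p A s) * norm2 (n * d) H powr p \<le> pnorm_pow m p (?A H)"
    unfolding H_def using p(1) vec_in_block_restrict[OF h(1)]
    by (rule block_p_ric_bounds(2)) (use s T chunk_n[of 0] in \<open>auto intro!: block_sparse_block_restrict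
        intro: finite_subset[of _ "{..<n}"]\<close>)
  also have "\<dots> \<le> (\<Sum>c<length L. pnorm_pow m p (?A (G c)))"
    unfolding AH pnorm_pow_uminus using p by (intro pnorm_pow_sum_le) auto
  also have "\<dots> \<le> (1 + \<delta>) * (real K powr (p / 2 - 1) * (\<Sum>c<length L. \<Sum>i\<in>chunk L K c. P i))"
    using G by (simp add: sum_mono sum_distrib_left)
  also have "\<dots> \<le> (1 + \<delta>) * (real K powr (p / 2 - 1) * (\<Sum>i\<in>{..<n} - T. P i))"
    using \<delta> chunks by (intro mult_left_mono) auto
  finally show ?thesis unfolding H_def \<delta>_def P_def by (simp add: mult.assoc)
qed

lemma eq_0_if_le_ratio_mult:
  fixes \<delta>1 \<delta>2 \<gamma> \<beta> Z :: real
  assumes "0 \<le> \<delta>1" "0 < \<beta>" "0 \<le> \<gamma>" "0 \<le> Z"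
    and cond: "\<delta>1 + \<beta> / \<gamma> * \<delta>2 < \<beta> / \<gamma> - 1"
    and ineq: "(1 - \<delta>2) * Z \<le> (1 + \<delta>1) * (\<gamma> / \<beta>) * Z"
  shows "Z = 0"
proof -
  \<comment> \<open>\<open>\<gamma> = 0\<close> is excluded since \<open>\<beta> / 0 = 0\<close> turns \<open>cond\<close> into \<open>\<delta>1 < -1\<close>\<close>
  have "\<gamma> > 0" using assms(1,3) cond by (cases "\<gamma> = 0") auto
  define r where "r = \<beta> / \<gamma>"
  have r: "r > 0" unfolding r_def using \<open>\<gamma> > 0\<close> assms(2) by simp
  have "1 + \<delta>1 < r * (1 - \<delta>2)"
    using cond unfolding r_def[symmetric] by (simp add: right_diff_distrib)
  moreover have "r * (1 - \<delta>2) * Z \<le> r * ((1 + \<delta>1) * (\<gamma> / \<beta>) * Z)"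
    using mult_left_mono[OF ineq, of r] r by (simp add: mult.assoc)
  moreover have "r * ((1 + \<delta>1) * (\<gamma> / \<beta>) * Z) = (1 + \<delta>1) * Z"
    using \<open>\<gamma> > 0\<close> assms(2) by (simp add: r_def)
  ultimately show ?thesis
    using assms(4) mult_strict_right_mono[of "1 + \<delta>1" "r * (1 - \<delta>2)" Z] by fastforce
qed

lemma card_diff_bounds:
  assumes "finite T0" "finite Tt" "card T0 \<le> k"
    and "real (card Tt) = \<rho> * real k" "real (card (Tt \<inter> T0)) = \<alpha> * \<rho> * real k"
  shows "real (card (Tt - T0)) = (1 - \<alpha>) * \<rho> * real k"
    and "real (card (T0 - Tt) + card (Tt - T0)) \<le> (1 + \<rho> - 2 * \<alpha> * \<rho>) * real k"
proof -
  have "card Tt = card (Tt \<inter> T0) + card (Tt - T0)" "card T0 = card (Tt \<inter> T0) + card (T0 - Tt)"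
    using assms(1,2) card_Int_Diff[of Tt T0] card_Int_Diff[of T0 Tt] by (simp_all add: Int_commute)
  then show "real (card (Tt - T0)) = (1 - \<alpha>) * \<rho> * real k"
    and "real (card (T0 - Tt) + card (Tt - T0)) \<le> (1 + \<rho> - 2 * \<alpha> * \<rho>) * real k"
    using assms(3-5) by (auto simp: algebra_simps)
qed

lemma vec_eq_0_if_block_restrict_and_tail_eq_0:
  assumes "vec_in (n * d) h" "T \<subseteq> U" "U \<subseteq> {..<n}" "0 < p"
    and "norm2 (n * d) (block_restrict d U h) = 0"
    and "(\<Sum>i\<in>{..<n} - T. block_norm2 d h i powr p) = 0"
  shows "h = (\<lambda>_. 0)"
proof (rule vec_eq_0_if_block_norm2_eq_0[OF assms(1)])
  fix i assume "i < n"
  have "finite U" using assms(3) finite_subset by blast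
  then have "i \<in> U \<Longrightarrow> block_norm2 d h i = 0"
    using assms(5) unfolding norm2_block_restrict[OF assms(3)] by (simp add: sum_nonneg_eq_0_iff)
  moreover have "i \<in> {..<n} - T \<Longrightarrow> block_norm2 d h i = 0"
    using assms(6) \<open>i < n\<close> by (simp add: sum_nonneg_eq_0_iff)
  ultimately show "block_norm2 d h i = 0" using assms(2) \<open>i < n\<close> by blast
qed

lemma cone_tail_le_gamma:
  fixes h :: "nat \<Rightarrow> real" and d :: nat and p :: real
  defines "P \<equiv> \<lambda>i. block_norm2 d h i powr p"
  assumes p: "0 < p" "p \<le> 1" and om: "0 \<le> \<omega>" "\<omega> \<le> 1" and k: "k > 0"
    and T0: "T0 \<subseteq> {..<n}" "card T0 \<le> k" and Tt: "Tt \<subseteq> {..<n}"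
    and rho: "real (card Tt) = \<rho> * real k"
    and alpha: "real (card (Tt \<inter> T0)) = \<alpha> * \<rho> * real k"
    and a_ge: "real a \<ge> (1 - \<alpha>) * \<rho>"
    and L: "distinct L" "set L = {..<n} - T0" "nonincreasing_along L (block_norm2 d h)"
    and cone: "(\<Sum>i\<in>{..<n} - T0. P i)
      \<le> \<omega> * (\<Sum>i\<in>T0. P i) + (1 - \<omega>) * ((\<Sum>i\<in>T0 - Tt. P i) + (\<Sum>i\<in>Tt - T0. P i))"
  shows "(\<Sum>i\<in>{..<n} - T0. P i)
    \<le> (\<omega> + (1 - \<omega>) * (1 + \<rho> - 2 * \<alpha> * \<rho>) powr (1 - p / 2)) * real k powr (1 - p / 2)
      * norm2 (n * d) (block_restrict d (T0 \<union> chunk L (a * k) 0) h) powr p"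
proof -
  define e where "e = 1 - p / 2"
  define Y where "Y = norm2 (n * d) (block_restrict d (T0 \<union> chunk L (a * k) 0) h) powr p"
  have fin: "finite T0" "finite Tt" using T0 Tt finite_subset by auto
  note cards = card_diff_bounds[OF fin T0(2) rho alpha]
  have "real (card (Tt - T0)) \<le> real a * real k"
    unfolding cards(1) using a_ge k by (intro mult_right_mono) auto
  then have "card (Tt - T0) \<le> a * k" by (simp flip: of_nat_mult)
  then have "(\<Sum>i\<in>{..<n} - T0. P i) \<le> (\<omega> * real (card T0) powr e
      + (1 - \<omega>) * real (card (T0 - Tt) + card (Tt - T0)) powr e) * Y"
    unfolding Y_def P_def e_def using cone_tail_bound[OF p om T0(1) Tt L] cone P_def by blast
  also have "\<dots> \<le> (\<omega> * real k powr e + (1 - \<omega>) * ((1 + \<rho> - 2 * \<alpha> * \<rho>) * real k) powr e) * Y"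
    using cards(2) T0(2) om p unfolding Y_def e_def
    by (intro mult_right_mono add_mono mult_left_mono powr_mono2) auto
  also have "\<dots> = (\<omega> + (1 - \<omega>) * (1 + \<rho> - 2 * \<alpha> * \<rho>) powr e) * real k powr e * Y"
    using cards(2) k
    by (subst powr_mult) (auto simp: algebra_simps zero_le_mult_iff intro: order_trans[OF of_nat_0_le_iff])
  finally show ?thesis unfolding Y_def e_def .
qed

lemma kernel_vector_eq_0:
  fixes h :: "nat \<Rightarrow> real" and d :: nat and p :: real
  defines "P \<equiv> \<lambda>i. block_norm2 d h i powr p"
  assumes p: "0 < p" "p \<le> 1" and d: "0 < d" and k: "k > 0" and a: "a > 1"
    and h: "vec_in (n * d) h" "mat_vec m (n * d) A h = (\<lambda>_. 0)"
    and T0: "T0 \<subseteq> {..<n}" "card T0 \<le> k" and Tt: "Tt \<subseteq> {..<n}"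
    and rho: "real (card Tt) = \<rho> * real k"
    and alpha: "real (card (Tt \<inter> T0)) = \<alpha> * \<rho> * real k"
    and om: "0 \<le> \<omega>" "\<omega> \<le> 1"
    and a_ge: "real a \<ge> (1 - \<alpha>) * \<rho>"
    and ric: "block_p_ric m n d p A (a * k)
        + real a powr (1 - p / 2) / (\<omega> + (1 - \<omega>) * (1 + \<rho> - 2 * \<alpha> * \<rho>) powr (1 - p / 2))
          * block_p_ric m n d p A ((a + 1) * k)
      < real a powr (1 - p / 2) / (\<omega> + (1 - \<omega>) * (1 + \<rho> - 2 * \<alpha> * \<rho>) powr (1 - p / 2)) - 1"
    and cone: "(\<Sum>i\<in>{..<n} - T0. P i)
      \<le> \<omega> * (\<Sum>i\<in>T0. P i) + (1 - \<omega>) * ((\<Sum>i\<in>T0 - Tt. P i) + (\<Sum>i\<in>Tt - T0. P i))"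
  shows "h = (\<lambda>_. 0)"
proof -
  define e where "e = 1 - p / 2"
  define \<gamma> where "\<gamma> = \<omega> + (1 - \<omega>) * (1 + \<rho> - 2 * \<alpha> * \<rho>) powr e"
  define \<beta> where "\<beta> = real a powr e"
  define K where "K = a * k"
  obtain L where L: "distinct L" "set L = {..<n} - T0" "nonincreasing_along L (block_norm2 d h)"
    using exists_nonincreasing_enumeration[of "{..<n} - T0" "block_norm2 d h"] by auto
  define U where "U = T0 \<union> chunk L K 0"
  define Y where "Y = norm2 (n * d) (block_restrict d U h) powr p"
  define tail where "tail = (\<Sum>i\<in>{..<n} - T0. P i)"
  have tail: "tail \<le> \<gamma> * real k powr e * Y"
    unfolding tail_def Y_def U_def P_def \<gamma>_def e_def K_def
    using cone_tail_le_gamma[OF p om k T0 Tt rho alpha a_ge L] cone P_def by blast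
  have "card U \<le> (a + 1) * k"
    using card_Un_le[of T0 "chunk L K 0"] card_chunk_le[of L K 0] T0(2) unfolding U_def K_def by simp
  then have "(1 - block_p_ric m n d p A ((a + 1) * k)) * Y
      \<le> (1 + block_p_ric m n d p A K) * real K powr (p / 2 - 1) * tail"
    unfolding Y_def U_def tail_def P_def using d k a
    by (intro shifting_bound[OF p d _ h L _ T0(1)]) (auto simp: K_def)
  also have "\<dots> \<le> (1 + block_p_ric m n d p A K) * real K powr (p / 2 - 1) * (\<gamma> * real k powr e * Y)"
    using tail block_p_ric_nonneg[OF p(1)] by (intro mult_left_mono) auto
  also have "\<dots> = (1 + block_p_ric m n d p A K) * (\<gamma> / \<beta>) * Y"
    using k a unfolding K_def \<beta>_def e_def
    by (simp add: powr_mult powr_minus_divide[symmetric] field_simps flip: powr_add)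
  finally have "Y = 0"
    using block_p_ric_nonneg[OF p(1)] ric om a unfolding K_def \<beta>_def \<gamma>_def e_def Y_def
    by (intro eq_0_if_le_ratio_mult) auto
  moreover have "0 \<le> tail" unfolding tail_def P_def by (simp add: sum_nonneg)
  ultimately have "tail = 0" using tail by simp
  show ?thesis
  proof (rule vec_eq_0_if_block_restrict_and_tail_eq_0[OF h(1) _ _ p(1)])
    show "T0 \<subseteq> U" "U \<subseteq> {..<n}"
      using T0(1) L(2) chunk_subset[of L K 0] unfolding U_def by auto
    show "norm2 (n * d) (block_restrict d U h) = 0" using \<open>Y = 0\<close> p unfolding Y_def by simp
    show "(\<Sum>i\<in>{..<n} - T0. block_norm2 d h i powr p) = 0"
      using \<open>tail = 0\<close> unfolding tail_def P_def .
  qed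
qed

theorem corollary1:
  fixes m n d k :: nat and p \<omega> \<rho> \<alpha> :: real and a :: nat
    and A :: "nat \<Rightarrow> nat \<Rightarrow> real" and x y :: "nat \<Rightarrow> real"
    and T0 Tt :: "nat set"
  assumes hp: "0 < p" "p \<le> 1"
    and hk: "k > 0"
    and hx: "vec_in (n * d) x" "block_sparse n d k x"
    and hT0: "T0 = block_support n d x"
    and hy: "y = mat_vec m (n * d) A x"
    and hTt: "Tt \<subseteq> {..<n}"
    and hrho: "\<rho> \<ge> 0" "real (card Tt) = \<rho> * real k"
    and halpha: "\<alpha> \<ge> 0" "real (card (Tt \<inter> T0)) = \<alpha> * \<rho> * real k"
    and homega: "0 \<le> \<omega>" "\<omega> \<le> 1"
    and ha: "real a \<ge> (1 - \<alpha>) * \<rho>" "a > 1"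
    and hdelta: "block_p_ric m n d p A (a * k)
        + real a powr (1 - p / 2) / (\<omega> + (1 - \<omega>) * (1 + \<rho> - 2 * \<alpha> * \<rho>) powr (1 - p / 2))
          * block_p_ric m n d p A ((a + 1) * k)
      < real a powr (1 - p / 2) / (\<omega> + (1 - \<omega>) * (1 + \<rho> - 2 * \<alpha> * \<rho>) powr (1 - p / 2)) - 1"
  shows "\<forall>z. vec_in (n * d) z \<and> mat_vec m (n * d) A z = y \<and> z \<noteq> x \<longrightarrow>
           weighted_obj n d p \<omega> Tt x < weighted_obj n d p \<omega> Tt z"
proof (intro allI impI)
  fix z assume "vec_in (n * d) z \<and> mat_vec m (n * d) A z = y \<and> z \<noteq> x"
  then have z: "vec_in (n * d) z" "mat_vec m (n * d) A z = y" "z \<noteq> x" by auto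
  show "weighted_obj n d p \<omega> Tt x < weighted_obj n d p \<omega> Tt z"
  proof (rule ccontr)
    assume "\<not> weighted_obj n d p \<omega> Tt x < weighted_obj n d p \<omega> Tt z"
    then have obj: "weighted_obj n d p \<omega> Tt z \<le> weighted_obj n d p \<omega> Tt x" by simp
    have d: "0 < d"
      using z(1,3) hx(1) unfolding vec_in_def by (cases "d = 0") (auto simp: fun_eq_iff)
    have "(\<lambda>l. z l - x l) = (\<lambda>_. 0)"
    proof (rule kernel_vector_eq_0[OF hp d hk ha(2) _ _ _ _ hTt hrho(2) halpha(2) homega ha(1) hdelta])
      show "vec_in (n * d) (\<lambda>l. z l - x l)" using z(1) hx(1) unfolding vec_in_def by simp
      show "mat_vec m (n * d) A (\<lambda>l. z l - x l) = (\<lambda>_. 0)" using z(2) hy by (simp add: mat_vec_diff)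
      show "T0 \<subseteq> {..<n}" "card T0 \<le> k"
        using hx(2) unfolding hT0 block_sparse_def block_support_def by auto
    qed (rule weighted_obj_le_imp_cone[OF hp homega hT0 hTt obj])
    then show False using z(3) by (auto simp: fun_eq_iff)
  qed
qed

end
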